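(* Let $g\sim(a,b,\mu)$ be a Bernstein function and $r:=r[g]$. Then \[\big[(t\operatorname{Re}z)\,e^{-t\operatorname{Re}z}\big]\,r(t)\le\operatorname{Re}g(z)\le|g(z)|\le\max(2,t|z|)\,r(t)\] for all $t>0$ and all $z\in\mathbb C$ with $\operatorname{Re}z>0$.
   Context: A Bernstein function $g\sim(a,b,\mu)$ is $g(z)=a+bz+\int_{(0,\infty)}(1-e^{-sz})\mu(\mathrm ds)$ ($\operatorname{Re} z>0$) with $a,b\ge0$, $\mu$ positive Radon on $(0,\infty)$, $\int\frac{s}{1+s}\mu(\mathrm ds)<\infty$. Rate function $r[g](t):=\frac a2+\frac bt+\int_{(0,\infty)}\min(s/t,1)\mu(\mathrm ds)$, $t>0$. *)

theory Defs
  imports "HOL-Analysis.Analysis"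
begin

text \<open>A Bernstein triple (a,b,mu): a,b \<ge> 0 and mu a positive measure on the Borel sets
  of the reals, of which only the restriction to (0,\<infinity>) matters, with
  integral of s/(1+s) over (0,\<infinity>) finite. (This finiteness implies mu is Radon on (0,\<infinity>).)\<close>
definition bernstein_triple :: "real \<Rightarrow> real \<Rightarrow> real measure \<Rightarrow> bool" where
  "bernstein_triple a b \<mu> \<longleftrightarrow> a \<ge> 0 \<and> b \<ge> 0 \<and> sets \<mu> = sets borel \<and>
     set_integrable \<mu> {0<..} (\<lambda>s. s / (1 + s))"

definition bernstein_fun :: "real \<Rightarrow> real \<Rightarrow> real measure \<Rightarrow> complex \<Rightarrow> complex" where
  "bernstein_fun a b \<mu> z =
     complex_of_real a + complex_of_real b * z
     + (LINT s:{0<..}|\<mu>. (1 - exp (- (complex_of_real s * z))))"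

definition rate_fun :: "real \<Rightarrow> real \<Rightarrow> real measure \<Rightarrow> real \<Rightarrow> real" where
  "rate_fun a b \<mu> t = a / 2 + b / t + (LINT s:{0<..}|\<mu>. min (s / t) 1)"

end

theory Submission
  imports Defs
begin

(* Write c = (t Re z) e^(-t Re z) and K = max 2 (t |z|).  Both g and r are sums of a constant
   part, a linear part and an integral over (0,oo), and the estimate is proved termwise:
   - pointwise, the kernel 1 - e^(-sz) of g is compared with the kernel min(s/t,1) of r:
       c * min(s/t,1) <= Re (1 - e^(-sz))   and   |1 - e^(-sz)| <= K * min(s/t,1);
     these follow from |1 - e^(-w)| <= min(|w|, 2), Re (1 - e^(-w)) >= 1 - e^(-Re w) and
     x e^(-x) <= 1 - e^(-x);
   - both kernels are dominated by multiples of s/(1+s), hence integrable for a Bernstein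
     triple, so the pointwise bounds integrate to bounds between the integral parts;
   - the terms a + bz and a/2 + b/t are compared directly. *)

text \<open>On the closed right half plane, w \<mapsto> exp(-w) is 1-Lipschitz (its derivative has norm
  at most 1 there), which gives the bound by |w| for small arguments.\<close>
lemma norm_one_minus_exp_le:
  fixes w :: complex
  assumes "Re w \<ge> 0"
  shows "cmod (1 - exp (- w)) \<le> cmod w"
proof -
  let ?S = "{u::complex. Re u \<ge> 0}"
  have "cmod ((\<lambda>u. exp (- u)) w - (\<lambda>u. exp (- u)) 0) \<le> 1 * cmod (w - 0)"
  proof (rule field_differentiable_bound[OF convex_halfspace_Re_ge])
    fix u assume "u \<in> ?S"
    show "((\<lambda>u. exp (- u)) has_field_derivative (- exp (- u))) (at u within ?S)"
      by (auto intro!: derivative_eq_intros)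
    show "cmod (- exp (- u)) \<le> 1"
      using \<open>u \<in> ?S\<close> by (simp add: norm_exp_eq_Re)
  qed (use assms in auto)
  then show ?thesis
    by (simp add: norm_minus_commute)
qed

lemma norm_one_minus_exp_le_two:
  fixes w :: complex
  assumes "Re w \<ge> 0"
  shows "cmod (1 - exp (- w)) \<le> 2"
proof -
  have "cmod (1 - exp (- w)) \<le> 1 + cmod (exp (- w))"
    using norm_triangle_ineq4[of 1 "exp (- w)"] by simp
  also have "cmod (exp (- w)) \<le> 1"
    using assms by (simp add: norm_exp_eq_Re)
  finally show ?thesis by simp
qed

lemma Re_one_minus_exp_ge:
  fixes w :: complex
  shows "1 - exp (- Re w) \<le> Re (1 - exp (- w))"
  using complex_Re_le_cmod[of "exp (- w)"] by (simp add: norm_exp_eq_Re)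

text \<open>A restatement of 1 + x \<le> e^x.\<close>
lemma mult_exp_minus_le_one_minus_exp:
  fixes x :: real
  shows "x * exp (- x) \<le> 1 - exp (- x)"
proof -
  have "(1 + x) * exp (- x) \<le> 1"
    using exp_ge_add_one_self[of x] by (simp add: exp_minus field_simps)
  then show ?thesis by (simp add: algebra_simps)
qed

lemma kernel_lower_bound:
  fixes s t :: real and z :: complex
  assumes "t > 0" "s \<ge> 0" "Re z \<ge> 0"
  shows "(t * Re z) * exp (- (t * Re z)) * min (s / t) 1
           \<le> Re (1 - exp (- (complex_of_real s * z)))"
proof -
  define w where "w = Re z"
  have w: "w \<ge> 0" using assms(3) by (simp add: w_def)
  have "(t * w) * exp (- (t * w)) * min (s / t) 1 \<le> 1 - exp (- (s * w))"
  proof (cases "s \<le> t")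
    case True
    have "(t * w) * exp (- (t * w)) * min (s / t) 1 = (s * w) * exp (- (t * w))"
      using True assms(1) by simp
    also have "\<dots> \<le> (s * w) * exp (- (s * w))"
      using True w assms(2) by (intro mult_left_mono) (auto intro: mult_right_mono)
    also have "\<dots> \<le> 1 - exp (- (s * w))"
      by (rule mult_exp_minus_le_one_minus_exp)
    finally show ?thesis .
  next
    case False
    have "(t * w) * exp (- (t * w)) * min (s / t) 1 = (t * w) * exp (- (t * w))"
      using False assms(1) by simp
    also have "\<dots> \<le> 1 - exp (- (t * w))"
      by (rule mult_exp_minus_le_one_minus_exp)
    also have "\<dots> \<le> 1 - exp (- (s * w))"
      using False w by (simp add: mult_right_mono)
    finally show ?thesis .
  qed
  also have "\<dots> \<le> Re (1 - exp (- (complex_of_real s * z)))"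
    using Re_one_minus_exp_ge[of "complex_of_real s * z"] by (simp add: w_def)
  finally show ?thesis by (simp add: w_def)
qed

lemma kernel_upper_bound:
  fixes s t :: real and z :: complex
  assumes "t > 0" "s \<ge> 0" "Re z \<ge> 0"
  shows "cmod (1 - exp (- (complex_of_real s * z))) \<le> max 2 (t * cmod z) * min (s / t) 1"
proof -
  have Re_sz: "Re (complex_of_real s * z) \<ge> 0"
    using assms by simp
  show ?thesis
  proof (cases "s \<le> t")
    case True
    have "cmod (1 - exp (- (complex_of_real s * z))) \<le> s * cmod z"
      using norm_one_minus_exp_le[OF Re_sz] assms(2) by (simp add: norm_mult)
    also have "\<dots> = (t * cmod z) * (s / t)"
      using assms(1) by simp
    also have "\<dots> \<le> max 2 (t * cmod z) * (s / t)"
      using assms by (intro mult_right_mono) auto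
    finally show ?thesis
      using True assms(1) by simp
  next
    case False
    then show ?thesis
      using norm_one_minus_exp_le_two[OF Re_sz] assms(1) by simp
  qed
qed

lemma min_div_le_bernstein_weight:
  fixes s t :: real
  assumes "t > 0" "s \<ge> 0"
  shows "min (s / t) 1 \<le> 2 * max 1 (1 / t) * (s / (1 + s))"
proof (cases "s \<le> 1")
  case True
  have "min (s / t) 1 \<le> s * (1 / t)"
    by simp
  also have "\<dots> \<le> max 1 (1 / t) * s"
    using mult_right_mono[of "1 / t" "max 1 (1 / t)" s] assms(2) by (simp add: mult.commute)
  also have "\<dots> \<le> max 1 (1 / t) * (2 * (s / (1 + s)))"
  proof (intro mult_left_mono)
    show "s \<le> 2 * (s / (1 + s))"
      using True assms(2) by (simp add: field_simps mult_left_le_one_le)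
  qed simp
  finally show ?thesis by simp
next
  case False
  have "min (s / t) 1 \<le> 1 * 1" by simp
  also have "\<dots> \<le> max 1 (1 / t) * (2 * (s / (1 + s)))"
    using False by (intro mult_mono) (auto simp: field_simps)
  finally show ?thesis by simp
qed

lemma bernstein_triple_measurable:
  fixes f :: "real \<Rightarrow> 'b::topological_space"
  assumes "bernstein_triple a b \<mu>" "f \<in> borel_measurable borel"
  shows "f \<in> borel_measurable \<mu>"
  using assms measurable_cong_sets[of \<mu> borel] unfolding bernstein_triple_def by blast

lemma bernstein_dominated_integrable:
  fixes f :: "real \<Rightarrow> 'b::{banach, second_countable_topology}"
  assumes "bernstein_triple a b \<mu>" "f \<in> borel_measurable borel"
    and "\<And>s. s > 0 \<Longrightarrow> norm (f s) \<le> C * (s / (1 + s))"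
  shows "set_integrable \<mu> {0<..} f"
proof (rule set_integrable_bound)
  show "set_integrable \<mu> {0<..} (\<lambda>s. C * (s / (1 + s)))"
    using assms(1) unfolding bernstein_triple_def by (intro set_integrable_mult_right) simp
  show "set_borel_measurable \<mu> {0<..} f"
    unfolding set_borel_measurable_def
    by (rule bernstein_triple_measurable[OF assms(1)]) (use assms(2) in measurable)
  show "AE s in \<mu>. s \<in> {0<..} \<longrightarrow> norm (f s) \<le> norm (C * (s / (1 + s)))"
  proof (intro AE_I2 impI)
    fix s :: real assume "s \<in> {0<..}"
    then show "norm (f s) \<le> norm (C * (s / (1 + s)))"
      using order_trans[OF assms(3)[of s] abs_ge_self] by (simp only: real_norm_def mem_Collect_eq greaterThan_iff)
  qed
qed

lemma rate_kernel_integrable: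
  assumes "bernstein_triple a b \<mu>" "t > 0"
  shows "set_integrable \<mu> {0<..} (\<lambda>s. min (s / t) 1)"
  by (rule bernstein_dominated_integrable[OF assms(1), where C = "2 * max 1 (1 / t)"])
     (use assms(2) min_div_le_bernstein_weight in auto)

text \<open>The kernel of g is integrable: by the upper kernel bound at t = 1 it is at most
  max 2 |z| * min s 1, which is dominated by the weight.\<close>
lemma bernstein_kernel_integrable:
  assumes "bernstein_triple a b \<mu>" "Re z \<ge> 0"
  shows "set_integrable \<mu> {0<..} (\<lambda>s. 1 - exp (- (complex_of_real s * z)))"
proof (rule bernstein_dominated_integrable[OF assms(1), where C = "max 2 (cmod z) * 2"])
  fix s :: real assume "s > 0"
  have "cmod (1 - exp (- (complex_of_real s * z))) \<le> max 2 (cmod z) * min s 1"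
    using kernel_upper_bound[of 1 s z] \<open>s > 0\<close> assms(2) by simp
  also have "\<dots> \<le> max 2 (cmod z) * (2 * (s / (1 + s)))"
    using min_div_le_bernstein_weight[of 1 s] \<open>s > 0\<close> by (intro mult_left_mono) auto
  finally show "cmod (1 - exp (- (complex_of_real s * z))) \<le> max 2 (cmod z) * 2 * (s / (1 + s))"
    by simp
qed measurable

lemma set_integral_Re:
  fixes f :: "'a \<Rightarrow> complex"
  assumes "set_integrable M A f"
  shows "set_integrable M A (\<lambda>x. Re (f x))" "Re (LINT x:A|M. f x) = (LINT x:A|M. Re (f x))"
  using integrable_Re[of M "\<lambda>x. indicator A x *\<^sub>R f x"] integral_Re[of M "\<lambda>x. indicator A x *\<^sub>R f x"]
    assms
  by (simp_all add: set_integrable_def set_lebesgue_integral_def)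

lemma bernstein_integral_lower_bound:
  assumes "bernstein_triple a b \<mu>" "t > 0" "Re z \<ge> 0"
  shows "(t * Re z) * exp (- (t * Re z)) * (LINT s:{0<..}|\<mu>. min (s / t) 1)
           \<le> Re (LINT s:{0<..}|\<mu>. 1 - exp (- (complex_of_real s * z)))"
proof -
  note F = bernstein_kernel_integrable[OF assms(1,3)]
  have "(t * Re z) * exp (- (t * Re z)) * (LINT s:{0<..}|\<mu>. min (s / t) 1)
          = (LINT s:{0<..}|\<mu>. (t * Re z) * exp (- (t * Re z)) * min (s / t) 1)"
    by simp
  also have "\<dots> \<le> (LINT s:{0<..}|\<mu>. Re (1 - exp (- (complex_of_real s * z))))"
    using rate_kernel_integrable[OF assms(1,2)] set_integral_Re(1)[OF F]
      kernel_lower_bound[OF assms(2) _ assms(3)]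
    by (intro set_integral_mono) auto
  also have "\<dots> = Re (LINT s:{0<..}|\<mu>. 1 - exp (- (complex_of_real s * z)))"
    using set_integral_Re(2)[OF F] by simp
  finally show ?thesis .
qed

lemma bernstein_integral_upper_bound:
  assumes "bernstein_triple a b \<mu>" "t > 0" "Re z \<ge> 0"
  shows "cmod (LINT s:{0<..}|\<mu>. 1 - exp (- (complex_of_real s * z)))
           \<le> max 2 (t * cmod z) * (LINT s:{0<..}|\<mu>. min (s / t) 1)"
proof -
  note F = bernstein_kernel_integrable[OF assms(1,3)]
  have "cmod (LINT s:{0<..}|\<mu>. 1 - exp (- (complex_of_real s * z)))
          \<le> (LINT s:{0<..}|\<mu>. cmod (1 - exp (- (complex_of_real s * z))))"
    by (rule set_integral_norm_bound[OF F])
  also have "\<dots> \<le> (LINT s:{0<..}|\<mu>. max 2 (t * cmod z) * min (s / t) 1)"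
    using rate_kernel_integrable[OF assms(1,2)] set_integrable_norm[OF F]
      kernel_upper_bound[OF assms(2) _ assms(3)]
    by (intro set_integral_mono) auto
  also have "\<dots> = max 2 (t * cmod z) * (LINT s:{0<..}|\<mu>. min (s / t) 1)"
    by simp
  finally show ?thesis .
qed

text \<open>The part a + bz of g against the part a/2 + b/t of r, using c \<le> 1 and exp(-tRe z) \<le> 1.\<close>
lemma linear_part_lower_bound:
  fixes a b t :: real and z :: complex
  assumes "a \<ge> 0" "b \<ge> 0" "t > 0" "Re z \<ge> 0"
  shows "(t * Re z) * exp (- (t * Re z)) * (a / 2 + b / t)
           \<le> Re (complex_of_real a + complex_of_real b * z)"
proof -
  define c where "c = (t * Re z) * exp (- (t * Re z))"
  have "c \<le> 1 - exp (- (t * Re z))"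
    unfolding c_def by (rule mult_exp_minus_le_one_minus_exp)
  then have "c \<le> 1"
    using exp_gt_zero[of "- (t * Re z)"] by linarith
  then have "c * (a / 2) \<le> 1 * (a / 2)"
    using assms(1) by (intro mult_right_mono) auto
  moreover have "c * (b / t) \<le> b * Re z"
  proof -
    have "c * (b / t) = (b * Re z) * exp (- (t * Re z))"
      unfolding c_def using assms(3) by simp
    also have "\<dots> \<le> (b * Re z) * 1"
      using assms by (intro mult_left_mono) auto
    finally show ?thesis by simp
  qed
  ultimately show ?thesis
    using assms(1) by (simp add: c_def[symmetric] distrib_left)
qed

text \<open>The part a + bz of g against a/2 + b/t, using 2 \<le> K and t|z| \<le> K.\<close>
lemma linear_part_upper_bound:
  fixes a b t :: real and z :: complex
  assumes "a \<ge> 0" "b \<ge> 0" "t > 0"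
  shows "cmod (complex_of_real a + complex_of_real b * z) \<le> max 2 (t * cmod z) * (a / 2 + b / t)"
proof -
  have "cmod (complex_of_real a + complex_of_real b * z) \<le> a + b * cmod z"
    using norm_triangle_ineq[of "complex_of_real a" "complex_of_real b * z"] assms
    by (simp add: norm_mult)
  also have "a \<le> max 2 (t * cmod z) * (a / 2)"
    using mult_right_mono[of 2 "max 2 (t * cmod z)" "a / 2"] assms(1) by simp
  also have "b * cmod z = (t * cmod z) * (b / t)"
    using assms(3) by simp
  also have "\<dots> \<le> max 2 (t * cmod z) * (b / t)"
    using assms(2,3) by (intro mult_right_mono) auto
  finally show ?thesis
    by (simp add: distrib_left)
qed

theorem lemma4p1:
  fixes a b t :: real and \<mu> :: "real measure" and z :: complex
  assumes "bernstein_triple a b \<mu>"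
    and "t > 0" and "Re z > 0"
  shows "(t * Re z) * exp (- (t * Re z)) * rate_fun a b \<mu> t \<le> Re (bernstein_fun a b \<mu> z) \<and>
         Re (bernstein_fun a b \<mu> z) \<le> cmod (bernstein_fun a b \<mu> z) \<and>
         cmod (bernstein_fun a b \<mu> z) \<le> max 2 (t * cmod z) * rate_fun a b \<mu> t"
proof -
  have ab: "a \<ge> 0" "b \<ge> 0"
    using assms(1) unfolding bernstein_triple_def by auto
  have Re_z: "Re z \<ge> 0"
    using assms(3) by simp
  have lower: "(t * Re z) * exp (- (t * Re z)) * rate_fun a b \<mu> t \<le> Re (bernstein_fun a b \<mu> z)"
    using linear_part_lower_bound[OF ab assms(2) Re_z]
      bernstein_integral_lower_bound[OF assms(1,2) Re_z]
    unfolding rate_fun_def bernstein_fun_def by (simp add: distrib_left)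
  have upper: "cmod (bernstein_fun a b \<mu> z) \<le> max 2 (t * cmod z) * rate_fun a b \<mu> t"
    using linear_part_upper_bound[OF ab assms(2), of z]
      bernstein_integral_upper_bound[OF assms(1,2) Re_z]
      norm_triangle_ineq[of "complex_of_real a + complex_of_real b * z"
        "LINT s:{0<..}|\<mu>. 1 - exp (- (complex_of_real s * z))"]
    unfolding rate_fun_def bernstein_fun_def by (simp add: distrib_left)
  show ?thesis
    using lower upper complex_Re_le_cmod by blast
qed

end
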